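(* For every finite game $\Gamma$ whose players have CPT preferences, there exists a profile of conjectures $\sigma^*=(\sigma^*_1,\dots,\sigma^*_n)\in\prod_i\Delta(A_i)$ such that $\sigma_i^*\in\overline{co}\big(\mathcal{B}_i(\mu_{-i}(\sigma^*_{-i}))\big)$ for all $i\in N$.
   Context: A game $\Gamma=(N,(A_i),(x_i))$: players $N=\{1,\dots,n\}$, finite action sets $A_i$, payoffs $x_i:A\to\mathbb{R}$, $A=\prod_iA_i$, $A_{-i}=\prod_{j\neq i}A_j$. Each player $i$ has CPT preferences with CPT value functional $V_i$ on finite lotteries (determined by a reference point, a continuous strictly increasing value function vanishing at the reference point, and continuous strictly increasing probability weighting functions $w_i^\pm:[0,1]\to[0,1]$ fixing $0$ and $1$, via the standard rank-dependent CPT formula). $B_i=\Delta(A_i)$ is the set of black-box strategies; for a belief $\mu_{-i}\in\Delta(A_{-i})$ and $b_i\in B_i$, $\mu(b_i,\mu_{-i})[a]=b_i[a_i]\mu_{-i}[a_{-i}]$, and $\mathcal{B}_i(\mu_{-i})=\arg\max_{b_i\in B_i}V_i(\{(\mu(b_i,\mu_{-i})[a],x_i(a))\}_{a\in A})$. For conjectures $\sigma_j\in\Delta(A_j)$, $\mu_{-i}(\sigma_{-i})[a_{-i}]=\prod_{j\ne i}\sigma_j[a_j]$. $\overline{co}$ denotes closed convex hull. *)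

theory Defs
  imports "HOL-Analysis.Analysis"
begin

definition Delta :: "'a::finite set \<Rightarrow> (real ^ 'a) set" where
  "Delta S = {b. (\<forall>a. 0 \<le> b $ a) \<and> (\<forall>a. a \<notin> S \<longrightarrow> b $ a = 0) \<and> (\<Sum>a\<in>S. b $ a) = 1}"

definition weighting_fun :: "(real \<Rightarrow> real) \<Rightarrow> bool" where
  "weighting_fun w \<longleftrightarrow> continuous_on {0..1} w \<and> strict_mono_on {0..1} w
     \<and> w ` {0..1} \<subseteq> {0..1} \<and> w 0 = 0 \<and> w 1 = 1"

definition cpt_pref :: "real \<Rightarrow> (real \<Rightarrow> real) \<Rightarrow> (real \<Rightarrow> real) \<Rightarrow> (real \<Rightarrow> real) \<Rightarrow> bool" where
  "cpt_pref r v wp wm \<longleftrightarrow> continuous_on UNIV v \<and> strict_mono v \<and> v r = 0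
     \<and> weighting_fun wp \<and> weighting_fun wm"

text \<open>CPT value of the finite lottery {(p s, X s)}_{s in S} (rank-dependent formula,
outcomes with equal value grouped together).\<close>
definition cpt_value :: "real \<Rightarrow> (real \<Rightarrow> real) \<Rightarrow> (real \<Rightarrow> real) \<Rightarrow> (real \<Rightarrow> real)
    \<Rightarrow> 's set \<Rightarrow> ('s \<Rightarrow> real) \<Rightarrow> ('s \<Rightarrow> real) \<Rightarrow> real" where
  "cpt_value r v wp wm S p X =
     (\<Sum>y\<in>X ` S \<inter> {r<..}.
        (wp (\<Sum>s\<in>{s\<in>S. y \<le> X s}. p s) - wp (\<Sum>s\<in>{s\<in>S. y < X s}. p s)) * v y)
   + (\<Sum>y\<in>X ` S \<inter> {..<r}.
        (wm (\<Sum>s\<in>{s\<in>S. X s \<le> y}. p s) - wm (\<Sum>s\<in>{s\<in>S. X s < y}. p s)) * v y)"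

definition profiles :: "('n \<Rightarrow> 'a set) \<Rightarrow> ('n \<Rightarrow> 'a) set" where
  "profiles A = PiE UNIV A"

definition prof_minus :: "'n \<Rightarrow> ('n \<Rightarrow> 'a) \<Rightarrow> ('n \<Rightarrow> 'a)" where
  "prof_minus i a = restrict a (UNIV - {i})"

definition mu_joint :: "'n \<Rightarrow> real ^ 'a \<Rightarrow> (('n \<Rightarrow> 'a) \<Rightarrow> real) \<Rightarrow> ('n \<Rightarrow> 'a) \<Rightarrow> real" where
  "mu_joint i b \<mu> a = b $ (a i) * \<mu> (prof_minus i a)"

definition mu_minus :: "'n::finite \<Rightarrow> ('n \<Rightarrow> real ^ 'a) \<Rightarrow> ('n \<Rightarrow> 'a) \<Rightarrow> real" where
  "mu_minus i \<sigma> a' = (\<Prod>j\<in>UNIV - {i}. \<sigma> j $ (a' j))"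

definition best_resp :: "('n \<Rightarrow> 'a::finite set) \<Rightarrow> ('n \<Rightarrow> ('n \<Rightarrow> 'a) \<Rightarrow> real)
    \<Rightarrow> ('n \<Rightarrow> real) \<Rightarrow> ('n \<Rightarrow> real \<Rightarrow> real) \<Rightarrow> ('n \<Rightarrow> real \<Rightarrow> real) \<Rightarrow> ('n \<Rightarrow> real \<Rightarrow> real)
    \<Rightarrow> 'n \<Rightarrow> (('n \<Rightarrow> 'a) \<Rightarrow> real) \<Rightarrow> (real ^ 'a) set" where
  "best_resp A x r v wp wm i \<mu> =
     {b \<in> Delta (A i). \<forall>b'\<in>Delta (A i).
        cpt_value (r i) (v i) (wp i) (wm i) (profiles A) (mu_joint i b' \<mu>) (x i)
        \<le> cpt_value (r i) (v i) (wp i) (wm i) (profiles A) (mu_joint i b \<mu>) (x i)}"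

end

theory Submission
  imports Defs
begin

text \<open>The best-response sets of CPT players need not be convex, so Kakutani's theorem
does not apply to them directly. Instead one proves a Kakutani-type theorem for the closed
convex hulls of a correspondence with closed graph and compact values: Brouwer's theorem,
applied to a partition-of-unity interpolation of a selection over an \<open>\<epsilon>\<close>-net, yields points
lying in the convex hull of the selection's values at nearby points, and by upper
hemicontinuity a limit of such points lies componentwise in the closed convex hulls of the
values there. The hypotheses are supplied by Berge's maximum theorem, since the CPT value of
\<open>\<mu>(b\<^sub>i, \<mu>\<^sub>-\<^sub>i(\<sigma>\<^sub>-\<^sub>i))\<close> is continuous in \<open>(b\<^sub>i, \<sigma>)\<close>.\<close>

subsection \<open>Correspondences with closed graph\<close>

definition closed_graph_on :: "'x::metric_space set \<Rightarrow> ('x \<Rightarrow> 'y::metric_space set) \<Rightarrow> bool" where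
  "closed_graph_on S G \<longleftrightarrow>
     (\<forall>xs ys x y. (\<forall>n. xs n \<in> S \<and> ys n \<in> G (xs n)) \<longrightarrow> xs \<longlonglongrightarrow> x \<longrightarrow> ys \<longlonglongrightarrow> y \<longrightarrow> x \<in> S
        \<longrightarrow> y \<in> G x)"

lemma closed_graph_onD:
  assumes "closed_graph_on S G" "\<And>n. xs n \<in> S" "\<And>n. ys n \<in> G (xs n)"
    and "xs \<longlonglongrightarrow> x" "ys \<longlonglongrightarrow> y" "x \<in> S"
  shows "y \<in> G x"
  using assms unfolding closed_graph_on_def by blast

lemma closed_graph_on_upper_hemicontinuous:
  fixes G :: "'x::metric_space \<Rightarrow> 'y::metric_space set"
  assumes G: "closed_graph_on S G" and K: "compact K" "\<And>x. x \<in> S \<Longrightarrow> G x \<subseteq> K"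
    and z: "z \<in> S" and \<eta>: "\<eta> > 0"
  obtains \<delta> where "\<delta> > 0" "\<And>x y. x \<in> S \<Longrightarrow> dist x z < \<delta> \<Longrightarrow> y \<in> G x \<Longrightarrow> \<exists>u\<in>G z. dist y u < \<eta>"
proof -
  have "\<exists>\<delta>>0. \<forall>x\<in>S. dist x z < \<delta> \<longrightarrow> (\<forall>y\<in>G x. \<exists>u\<in>G z. dist y u < \<eta>)"
  proof (rule ccontr)
    assume "\<not> ?thesis"
    then have "\<forall>n. \<exists>x\<in>S. dist x z < inverse (real (Suc n)) \<and> (\<exists>y\<in>G x. \<forall>u\<in>G z. \<not> dist y u < \<eta>)"
      by (metis of_nat_0_less_iff positive_imp_inverse_positive zero_less_Suc)
    then obtain xs ys where xs: "\<And>n. xs n \<in> S" "\<And>n. dist (xs n) z < inverse (real (Suc n))"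
      and ys: "\<And>n. ys n \<in> G (xs n)" "\<And>n u. u \<in> G z \<Longrightarrow> \<not> dist (ys n) u < \<eta>"
      by metis
    have "(\<lambda>n. dist (xs n) z) \<longlonglongrightarrow> 0"
      by (rule tendsto_sandwich[of "\<lambda>n. 0" _ _ "\<lambda>n. inverse (real (Suc n))"])
        (use xs(2) LIMSEQ_inverse_real_of_nat in \<open>auto intro: always_eventually less_imp_le\<close>)
    then have "xs \<longlonglongrightarrow> z" using tendsto_dist_iff by blast
    obtain l \<rho> where "l \<in> K" "strict_mono \<rho>" "(ys \<circ> \<rho>) \<longlonglongrightarrow> l"
      using compact_imp_seq_compact[OF K(1)] xs(1) ys(1) K(2) unfolding seq_compact_def by blast
    moreover have "(xs \<circ> \<rho>) \<longlonglongrightarrow> z" using \<open>xs \<longlonglongrightarrow> z\<close> \<open>strict_mono \<rho>\<close> LIMSEQ_subseq_LIMSEQ by blast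
    ultimately have "l \<in> G z" using closed_graph_onD[OF G, of "xs \<circ> \<rho>" "ys \<circ> \<rho>"] xs(1) ys(1) z by auto
    moreover obtain N where "dist ((ys \<circ> \<rho>) N) l < \<eta>"
      using \<open>(ys \<circ> \<rho>) \<longlonglongrightarrow> l\<close> \<eta> unfolding lim_sequentially by blast
    ultimately show False using ys(2)[of "l" "\<rho> N"] by simp
  qed
  then show thesis using that by blast
qed

lemma partition_of_unity_map:
  fixes g :: "'a::metric_space \<Rightarrow> 'b::real_normed_vector"
  assumes C: "finite C" "S \<subseteq> (\<Union>c\<in>C. ball c \<epsilon>)"
  obtains f where "continuous_on S f" "\<And>x. x \<in> S \<Longrightarrow> f x \<in> convex hull (g ` {c\<in>C. dist c x < \<epsilon>})"
proof
  define \<phi> :: "'a \<Rightarrow> 'a \<Rightarrow> real" where "\<phi> c x = max 0 (\<epsilon> - dist x c)" for c x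
  define \<Phi> where "\<Phi> x = (\<Sum>c\<in>C. \<phi> c x)" for x
  define f where "f x = (\<Sum>c\<in>C. (\<phi> c x / \<Phi> x) *\<^sub>R g c)" for x
  have \<phi>_nonneg: "0 \<le> \<phi> c x" for c x by (simp add: \<phi>_def)
  have \<Phi>_pos: "\<Phi> x > 0" if x: "x \<in> S" for x
  proof -
    obtain c where "c \<in> C" "x \<in> ball c \<epsilon>" using C(2) x by blast
    then have "\<phi> c x > 0" by (simp add: \<phi>_def dist_commute)
    then show ?thesis unfolding \<Phi>_def by (rule sum_pos2[OF C(1) \<open>c \<in> C\<close>]) (rule \<phi>_nonneg)
  qed
  have \<phi>_cont: "continuous_on S (\<phi> c)" for c
    unfolding \<phi>_def by (intro continuous_intros)
  then have "continuous_on S \<Phi>"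
    unfolding \<Phi>_def by (intro continuous_on_sum)
  then show "continuous_on S f"
    unfolding f_def using \<phi>_cont \<Phi>_pos
    by (intro continuous_on_sum continuous_on_scaleR continuous_on_divide continuous_on_const) fastforce+
  fix x assume x: "x \<in> S"
  define C' where "C' = {c\<in>C. dist c x < \<epsilon>}"
  have outside: "\<phi> c x = 0" if "c \<in> C - C'" for c
    using that by (auto simp: C'_def \<phi>_def dist_commute)
  have f_eq: "f x = (\<Sum>c\<in>C'. (\<phi> c x / \<Phi> x) *\<^sub>R g c)"
    unfolding f_def by (rule sum.mono_neutral_right) (use C(1) outside in \<open>auto simp: C'_def\<close>)
  have "(\<Sum>c\<in>C'. \<phi> c x / \<Phi> x) = (\<Sum>c\<in>C. \<phi> c x / \<Phi> x)"
    by (rule sum.mono_neutral_left) (use C(1) outside in \<open>auto simp: C'_def\<close>)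
  also have "\<dots> = 1"
    using \<Phi>_pos[OF x] unfolding sum_divide_distrib[symmetric] \<Phi>_def by simp
  finally have "(\<Sum>c\<in>C'. (\<phi> c x / \<Phi> x) *\<^sub>R g c) \<in> convex hull (g ` C')"
    using C(1) \<phi>_nonneg \<Phi>_pos[OF x]
    by (intro convex_sum convex_convex_hull) (auto simp: C'_def intro: hull_inc)
  then show "f x \<in> convex hull (g ` {c\<in>C. dist c x < \<epsilon>})"
    unfolding f_eq C'_def .
qed

lemma brouwer_approximate_fixpoint:
  fixes g :: "'a::euclidean_space \<Rightarrow> 'a"
  assumes S: "compact S" "convex S" "S \<noteq> {}" and gS: "\<And>x. x \<in> S \<Longrightarrow> g x \<in> S" and "\<epsilon> > 0"
  obtains w where "w \<in> S" "w \<in> convex hull (g ` {c\<in>S. dist c w < \<epsilon>})"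
proof -
  have "\<exists>C. finite C \<and> C \<subseteq> S \<and> S \<subseteq> (\<Union>c\<in>C. ball c \<epsilon>)"
    using seq_compact_imp_totally_bounded[OF compact_imp_seq_compact[OF S(1)]] \<open>\<epsilon> > 0\<close> by blast
  then obtain C where C: "finite C" "C \<subseteq> S" "S \<subseteq> (\<Union>c\<in>C. ball c \<epsilon>)"
    by blast
  obtain f where f: "continuous_on S f" "\<And>x. x \<in> S \<Longrightarrow> f x \<in> convex hull (g ` {c\<in>C. dist c x < \<epsilon>})"
    using partition_of_unity_map[OF C(1,3)] by blast
  have hull_mono: "convex hull (g ` {c\<in>C. dist c x < \<epsilon>}) \<subseteq> convex hull (g ` {c\<in>S. dist c x < \<epsilon>})" for x
    using C(2) by (intro hull_mono image_mono) (simp add: Collect_mono_iff subset_iff)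
  have "convex hull (g ` {c\<in>S. dist c x < \<epsilon>}) \<subseteq> S" for x
    by (rule hull_minimal) (use gS S(2) in auto)
  then have "f ` S \<subseteq> S" using f(2) hull_mono by blast
  then obtain w where "w \<in> S" "f w = w"
    using brouwer[OF S f(1)] by blast
  then show thesis using that f(2)[OF \<open>w \<in> S\<close>] hull_mono by auto
qed

lemma convex_hull_near_convex:
  fixes F :: "'a::real_normed_vector set"
  assumes "convex F" "\<And>y. y \<in> Y \<Longrightarrow> \<exists>u\<in>F. dist y u < \<eta>" "y \<in> convex hull Y"
  shows "\<exists>u\<in>F. dist y u < \<eta>"
proof -
  define T where "T = (\<Union>u\<in>F. \<Union>b\<in>ball 0 \<eta>. {u + b})"
  have "y \<in> T" if "\<exists>u\<in>F. dist y u < \<eta>" for y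
  proof -
    from that obtain u where "u \<in> F" "dist y u < \<eta>" by blast
    moreover have "y - u \<in> ball 0 \<eta>" using \<open>dist y u < \<eta>\<close> by (simp add: dist_norm norm_minus_commute)
    ultimately show ?thesis
      unfolding T_def by (intro UN_I[OF \<open>u \<in> F\<close>] UN_I[of "y - u"]) simp_all
  qed
  moreover have "convex T" unfolding T_def by (rule convex_sums[OF \<open>convex F\<close> convex_ball])
  ultimately have "convex hull Y \<subseteq> T" by (rule_tac hull_minimal) (use assms(2) in auto)
  then obtain u b where "u \<in> F" "b \<in> ball 0 \<eta>" "y = u + b"
    using assms(3) unfolding T_def by blast
  then show ?thesis by (intro bexI[of _ u]) (auto simp: dist_norm)
qed

lemma vec_nth_limit_in_closure_convex_hull:
  fixes w :: "nat \<Rightarrow> 'b::euclidean_space ^ 'n" and G :: "'b ^ 'n \<Rightarrow> 'b set"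
  assumes G: "closed_graph_on S G" "compact K" "\<And>x. x \<in> S \<Longrightarrow> G x \<subseteq> K"
    and g: "\<And>c. c \<in> S \<Longrightarrow> g c $ i \<in> G c"
    and w: "\<And>n. w n \<in> convex hull (g ` {c\<in>S. dist c (w n) < \<epsilon> n})"
    and lim: "w \<longlonglongrightarrow> z" "\<epsilon> \<longlonglongrightarrow> 0" and "z \<in> S"
  shows "z $ i \<in> closure (convex hull (G z))"
  unfolding closure_approachable
proof (intro allI impI)
  fix \<eta> :: real assume "\<eta> > 0"
  then obtain \<delta> where "\<delta> > 0" and \<delta>:
    "\<And>x y. x \<in> S \<Longrightarrow> dist x z < \<delta> \<Longrightarrow> y \<in> G x \<Longrightarrow> \<exists>u\<in>G z. dist y u < \<eta> / 2"
    using closed_graph_on_upper_hemicontinuous[OF G \<open>z \<in> S\<close>, of "\<eta> / 2"] by auto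
  have "\<forall>\<^sub>F n in sequentially. \<epsilon> n < \<delta> / 2"
    using order_tendstoD(2)[OF lim(2), of "\<delta> / 2"] \<open>\<delta> > 0\<close> by simp
  moreover have "\<forall>\<^sub>F n in sequentially. dist (w n) z < min (\<delta> / 2) (\<eta> / 2)"
    using tendstoD[OF lim(1), of "min (\<delta> / 2) (\<eta> / 2)"] \<open>\<delta> > 0\<close> \<open>\<eta> > 0\<close> by simp
  ultimately obtain n where n: "\<epsilon> n < \<delta> / 2" "dist (w n) z < \<delta> / 2" "dist (w n) z < \<eta> / 2"
    using eventually_happens'[OF sequentially_bot eventually_conj] by auto
  \<comment> \<open>Every \<open>g c $ i\<close> with \<open>c \<in> C\<close> is \<open>\<eta>/2\<close>-close to \<open>G z\<close>; hence so is their convex combination \<open>w n $ i\<close>.\<close>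
  define C where "C = {c\<in>S. dist c (w n) < \<epsilon> n}"
  have near: "\<exists>u\<in>convex hull (G z). dist y u < \<eta> / 2" if y: "y \<in> (\<lambda>x. x $ i) ` g ` C" for y
  proof -
    obtain c where c: "c \<in> S" "dist c (w n) < \<epsilon> n" "y = g c $ i"
      using y unfolding C_def by blast
    have "dist c z < \<delta>"
      using dist_triangle[of c z "w n"] c(2) n(1,2) by linarith
    then obtain u where "u \<in> G z" "dist y u < \<eta> / 2"
      using \<delta>[OF c(1) _ g[OF c(1)]] c(3) by blast
    then show ?thesis using hull_subset[of "G z" convex] by blast
  qed
  have "w n $ i \<in> (\<lambda>x. x $ i) ` (convex hull (g ` C))"
    unfolding C_def using w by (rule imageI)
  also have "\<dots> = convex hull ((\<lambda>x. x $ i) ` g ` C)"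
    by (rule convex_hull_linear_image[OF bounded_linear.linear[OF bounded_linear_vec_nth]])
  finally obtain u where u: "u \<in> convex hull (G z)" "dist (w n $ i) u < \<eta> / 2"
    using convex_hull_near_convex[OF convex_convex_hull near] by blast
  have "dist u (z $ i) \<le> dist (w n $ i) u + dist (w n $ i) (z $ i)" by (rule dist_triangle3)
  also have "\<dots> \<le> dist (w n $ i) u + dist (w n) z" using dist_vec_nth_le by simp
  finally show "\<exists>y\<in>convex hull (G z). dist y (z $ i) < \<eta>"
    using u(2) n(3) by (intro bexI[OF _ u(1)]) linarith
qed

theorem product_fixpoint_closure_convex_hull:
  fixes S :: "('b::euclidean_space ^ 'n) set" and G :: "'n \<Rightarrow> 'b ^ 'n \<Rightarrow> 'b set"
  assumes S: "compact S" "convex S" "S \<noteq> {}"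
    and G_ne: "\<And>i x. x \<in> S \<Longrightarrow> G i x \<noteq> {}"
    and G_K: "\<And>i x. x \<in> S \<Longrightarrow> G i x \<subseteq> K i" and K: "\<And>i. compact (K i)"
    and G_S: "\<And>x t. x \<in> S \<Longrightarrow> (\<And>i. t $ i \<in> G i x) \<Longrightarrow> t \<in> S"
    and G_closed: "\<And>i. closed_graph_on S (G i)"
  shows "\<exists>z\<in>S. \<forall>i. z $ i \<in> closure (convex hull (G i z))"
proof -
  define g where "g x = (\<chi> i. SOME y. y \<in> G i x)" for x
  have g_G: "g x $ i \<in> G i x" if "x \<in> S" for x i
    unfolding g_def using G_ne[OF that] by (simp add: some_in_eq)
  have g_S: "g x \<in> S" if "x \<in> S" for x
    using G_S[OF that g_G[OF that]] .
  define \<epsilon> :: "nat \<Rightarrow> real" where "\<epsilon> n = inverse (real (Suc n))" for n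
  have "\<exists>w. w \<in> S \<and> w \<in> convex hull (g ` {c\<in>S. dist c w < \<epsilon> n})" for n
  proof -
    have "\<epsilon> n > 0" by (simp add: \<epsilon>_def)
    from brouwer_approximate_fixpoint[of S g, OF S g_S this] show ?thesis by blast
  qed
  then obtain w where w: "\<And>n. w n \<in> S" "\<And>n. w n \<in> convex hull (g ` {c\<in>S. dist c (w n) < \<epsilon> n})"
    using choice[of "\<lambda>n w. w \<in> S \<and> w \<in> convex hull (g ` {c\<in>S. dist c w < \<epsilon> n})"] by blast
  obtain z \<rho> where z: "z \<in> S" "strict_mono \<rho>" "(w \<circ> \<rho>) \<longlonglongrightarrow> z"
    using compact_imp_seq_compact[OF S(1)] w(1) unfolding seq_compact_def by blast
  have "(\<epsilon> \<circ> \<rho>) \<longlonglongrightarrow> 0"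
    unfolding \<epsilon>_def using LIMSEQ_subseq_LIMSEQ[OF LIMSEQ_inverse_real_of_nat z(2)] by (simp add: o_def)
  then have "z $ i \<in> closure (convex hull (G i z))" for i
    using vec_nth_limit_in_closure_convex_hull[of S "G i" "K i" g i "w \<circ> \<rho>" "\<epsilon> \<circ> \<rho>" z]
      G_closed K G_K g_G w(2) z(1,3) by simp
  then show ?thesis using z(1) by blast
qed

subsection \<open>Maximizers of continuous functions\<close>

definition maximizers :: "'b set \<Rightarrow> ('b \<Rightarrow> real) \<Rightarrow> 'b set" where
  "maximizers K f = {b\<in>K. \<forall>b'\<in>K. f b' \<le> f b}"

lemma maximizers_nonempty:
  fixes f :: "'b::topological_space \<Rightarrow> real"
  assumes "compact K" "K \<noteq> {}" "continuous_on K f"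
  shows "maximizers K f \<noteq> {}"
  using continuous_attains_sup[OF assms] unfolding maximizers_def by blast

lemma closed_graph_on_maximizers:
  fixes H :: "'b::metric_space \<times> 'x::metric_space \<Rightarrow> real"
  assumes K: "closed K" and H: "continuous_on (K \<times> S) H"
  shows "closed_graph_on S (\<lambda>s. maximizers K (\<lambda>b. H (b, s)))"
  unfolding closed_graph_on_def
proof (intro allI impI)
  fix xs ys s y
  assume seq: "\<forall>n. xs n \<in> S \<and> ys n \<in> maximizers K (\<lambda>b. H (b, xs n))"
    and lim: "xs \<longlonglongrightarrow> s" "ys \<longlonglongrightarrow> y" and "s \<in> S"
  have ys: "ys n \<in> K" "\<And>b. b \<in> K \<Longrightarrow> H (b, xs n) \<le> H (ys n, xs n)" for n
    using seq unfolding maximizers_def by auto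
  have "y \<in> K" using closed_sequentially[OF K] ys(1) lim(2) by blast
  moreover have "H (b, s) \<le> H (y, s)" if b: "b \<in> K" for b
  proof (rule LIMSEQ_le)
    show "(\<lambda>n. H (b, xs n)) \<longlonglongrightarrow> H (b, s)"
      by (rule continuous_on_tendsto_compose[OF H tendsto_Pair[OF tendsto_const lim(1)]])
        (use seq b \<open>s \<in> S\<close> in auto)
    show "(\<lambda>n. H (ys n, xs n)) \<longlonglongrightarrow> H (y, s)"
      by (rule continuous_on_tendsto_compose[OF H tendsto_Pair[OF lim(2,1)]])
        (use seq ys(1) \<open>y \<in> K\<close> \<open>s \<in> S\<close> in auto)
    show "\<exists>N. \<forall>n\<ge>N. H (b, xs n) \<le> H (ys n, xs n)" using ys(2) b by blast
  qed
  ultimately show "y \<in> maximizers K (\<lambda>b. H (b, s))" unfolding maximizers_def by blast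
qed

subsection \<open>Mixed strategies\<close>

lemma closed_Delta: "closed (Delta S)"
proof -
  have "Delta S = (\<Inter>a. {b. 0 \<le> b $ a}) \<inter> (\<Inter>a\<in>-S. {b. b $ a = 0}) \<inter> {b. (\<Sum>a\<in>S. b $ a) = 1}"
    unfolding Delta_def by auto
  also have "closed \<dots>"
    by (intro closed_Int closed_INT ballI closed_Collect_le closed_Collect_eq continuous_intros)
  finally show ?thesis .
qed

lemma sum_UNIV_Delta: "b \<in> Delta S \<Longrightarrow> (\<Sum>a\<in>UNIV. b $ a) = 1"
  unfolding Delta_def by (metis (mono_tags, lifting) DiffE finite sum.mono_neutral_right subset_UNIV mem_Collect_eq)

lemma Delta_norm_le_1:
  assumes "b \<in> Delta S"
  shows "norm b \<le> 1"
proof -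
  have "norm b \<le> (\<Sum>a\<in>UNIV. \<bar>b $ a\<bar>)" by (rule norm_le_l1_cart)
  also have "\<dots> = (\<Sum>a\<in>UNIV. b $ a)" using assms unfolding Delta_def by simp
  finally show ?thesis using sum_UNIV_Delta[OF assms] by simp
qed

lemma compact_Delta: "compact (Delta S)"
  unfolding compact_eq_bounded_closed using closed_Delta Delta_norm_le_1 bounded_iff by blast

lemma convex_Delta: "convex (Delta S)"
  unfolding convex_def Delta_def by (auto simp: sum.distrib sum_distrib_left[symmetric])

lemma axis_in_Delta: "a \<in> S \<Longrightarrow> axis a 1 \<in> Delta S"
  unfolding Delta_def by (auto simp: axis_def)

text \<open>A profile of mixed strategies is stacked into the rows of a single vector, so that the
product of the simplices is a compact convex subset of a Euclidean space.\<close>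
definition strategy_profiles :: "('n \<Rightarrow> 'a::finite set) \<Rightarrow> (real ^ 'a ^ 'n) set" where
  "strategy_profiles A = {s. \<forall>i. s $ i \<in> Delta (A i)}"

lemma strategy_profiles_eq_INT: "strategy_profiles A = (\<Inter>i. (\<lambda>s. s $ i) -` Delta (A i))"
  unfolding strategy_profiles_def by auto

lemma compact_strategy_profiles: "compact (strategy_profiles (A :: 'n::finite \<Rightarrow> 'a::finite set))"
proof -
  have "norm s \<le> real CARD('n)" if "s \<in> strategy_profiles A" for s
  proof -
    have "norm s \<le> (\<Sum>i\<in>UNIV. norm (s $ i))" unfolding norm_vec_def by (rule L2_set_le_sum) simp
    also have "\<dots> \<le> (\<Sum>i\<in>(UNIV::'n set). 1)"
      using that Delta_norm_le_1 by (intro sum_mono) (auto simp: strategy_profiles_def)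
    finally show ?thesis by simp
  qed
  then have "bounded (strategy_profiles A)" unfolding bounded_iff by blast
  moreover have "closed (strategy_profiles A)"
    unfolding strategy_profiles_eq_INT by (intro closed_INT ballI closed_vimage_vec_nth closed_Delta)
  ultimately show ?thesis by (simp add: compact_eq_bounded_closed)
qed

lemma convex_strategy_profiles: "convex (strategy_profiles A)"
  unfolding strategy_profiles_eq_INT
  by (intro convex_INT convex_linear_vimage convex_Delta bounded_linear.linear[OF bounded_linear_vec_nth])

lemma strategy_profiles_nonempty:
  assumes "\<And>i. A i \<noteq> {}"
  shows "strategy_profiles A \<noteq> {}"
proof -
  have "(\<chi> i. axis (SOME a. a \<in> A i) 1) \<in> strategy_profiles A"
    unfolding strategy_profiles_def using assms by (auto intro!: axis_in_Delta some_in_eq[THEN iffD2])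
  then show ?thesis by blast
qed

subsection \<open>Continuity of CPT values and best responses\<close>

lemma continuous_on_cpt_value:
  assumes w: "weighting_fun wp" "weighting_fun wm" and P: "finite P"
    and p_cont: "\<And>a. continuous_on D (\<lambda>z. p z a)"
    and p_nonneg: "\<And>z a. z \<in> D \<Longrightarrow> a \<in> P \<Longrightarrow> 0 \<le> p z a"
    and p_sum: "\<And>z. z \<in> D \<Longrightarrow> (\<Sum>a\<in>P. p z a) = 1"
  shows "continuous_on D (\<lambda>z. cpt_value r v wp wm P (p z) X)"
proof -
  have weight_cont: "continuous_on D (\<lambda>z. w (\<Sum>a\<in>T. p z a))" if "weighting_fun w" "T \<subseteq> P" for w T
  proof (rule continuous_on_compose2[of "{0..1}" w])
    show "continuous_on {0..1} w" using that(1) unfolding weighting_fun_def by blast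
    show "continuous_on D (\<lambda>z. \<Sum>a\<in>T. p z a)" by (intro continuous_on_sum p_cont)
    have "0 \<le> (\<Sum>a\<in>T. p z a) \<and> (\<Sum>a\<in>T. p z a) \<le> (\<Sum>a\<in>P. p z a)" if "z \<in> D" for z
      using p_nonneg[OF that] \<open>T \<subseteq> P\<close> by (auto intro: sum_nonneg sum_mono2[OF P])
    then show "(\<lambda>z. \<Sum>a\<in>T. p z a) ` D \<subseteq> {0..1}" using p_sum by fastforce
  qed
  show ?thesis unfolding cpt_value_def
    by (intro continuous_on_add continuous_on_sum continuous_on_mult continuous_on_diff
        continuous_on_const weight_cont w) auto
qed

lemma finite_profiles: "finite (profiles (A :: 'n::finite \<Rightarrow> 'a::finite set))"
  unfolding profiles_def by (intro finite_PiE) auto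

lemma mu_joint_mu_minus:
  "mu_joint i b (mu_minus i \<sigma>) a = b $ (a i) * (\<Prod>j\<in>UNIV-{i}. \<sigma> j $ (a j))"
  unfolding mu_joint_def mu_minus_def prof_minus_def
  by (intro arg_cong2[where f="(*)"] refl prod.cong) auto

lemma sum_mu_joint_mu_minus:
  fixes A :: "'n::finite \<Rightarrow> 'a::finite set"
  assumes b: "b \<in> Delta (A i)" and \<sigma>: "\<And>j. \<sigma> j \<in> Delta (A j)"
  shows "(\<Sum>a\<in>profiles A. mu_joint i b (mu_minus i \<sigma>) a) = 1"
proof -
  define \<tau> where "\<tau> = \<sigma>(i := b)"
  have \<tau>: "\<tau> j \<in> Delta (A j)" for j using b \<sigma> by (simp add: \<tau>_def)
  have "mu_joint i b (mu_minus i \<sigma>) a = (\<Prod>j\<in>UNIV. \<tau> j $ (a j))" for a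
  proof -
    have "(\<Prod>j\<in>UNIV. \<tau> j $ (a j)) = \<tau> i $ (a i) * (\<Prod>j\<in>UNIV-{i}. \<tau> j $ (a j))"
      by (rule prod.remove) auto
    also have "(\<Prod>j\<in>UNIV-{i}. \<tau> j $ (a j)) = (\<Prod>j\<in>UNIV-{i}. \<sigma> j $ (a j))"
      by (rule prod.cong) (auto simp: \<tau>_def)
    finally show ?thesis by (simp add: \<tau>_def mu_joint_mu_minus)
  qed
  then have "(\<Sum>a\<in>profiles A. mu_joint i b (mu_minus i \<sigma>) a) = (\<Sum>a\<in>PiE UNIV A. \<Prod>j\<in>UNIV. \<tau> j $ (a j))"
    unfolding profiles_def by simp
  also have "\<dots> = (\<Prod>j\<in>UNIV. \<Sum>c\<in>A j. \<tau> j $ c)"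
    by (rule prod_sum_PiE[symmetric]) auto
  also have "\<dots> = 1" using \<tau> unfolding Delta_def by simp
  finally show ?thesis .
qed

lemma continuous_on_cpt_payoff:
  fixes A :: "'n::finite \<Rightarrow> 'a::finite set"
  assumes "cpt_pref r v wp wm"
  shows "continuous_on (Delta (A i) \<times> strategy_profiles A)
           (\<lambda>(b, s). cpt_value r v wp wm (profiles A) (mu_joint i b (mu_minus i (\<lambda>j. s $ j))) X)"
proof -
  define p where "p z = mu_joint i (fst z) (mu_minus i (\<lambda>j. snd z $ j))"
    for z :: "(real ^ 'a) \<times> (real ^ 'a ^ 'n)"
  have "continuous_on (Delta (A i) \<times> strategy_profiles A) (\<lambda>z. cpt_value r v wp wm (profiles A) (p z) X)"
  proof (rule continuous_on_cpt_value[OF _ _ finite_profiles])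
    show "weighting_fun wp" "weighting_fun wm" using assms unfolding cpt_pref_def by auto
    show "continuous_on (Delta (A i) \<times> strategy_profiles A) (\<lambda>z. p z a)" for a
      unfolding p_def mu_joint_mu_minus by (intro continuous_intros)
    show "0 \<le> p z a" if "z \<in> Delta (A i) \<times> strategy_profiles A" for z a
      using that unfolding p_def mu_joint_mu_minus strategy_profiles_def Delta_def
      by (auto intro!: mult_nonneg_nonneg prod_nonneg)
    show "(\<Sum>a\<in>profiles A. p z a) = 1" if "z \<in> Delta (A i) \<times> strategy_profiles A" for z
      using that unfolding p_def strategy_profiles_def by (auto intro: sum_mu_joint_mu_minus)
  qed
  then show ?thesis by (simp add: p_def case_prod_beta)
qed

lemma best_resp_eq_maximizers:
  "best_resp A x r v wp wm i \<mu> =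
     maximizers (Delta (A i)) (\<lambda>b. cpt_value (r i) (v i) (wp i) (wm i) (profiles A) (mu_joint i b \<mu>) (x i))"
  unfolding best_resp_def maximizers_def ..

lemma best_resp_subset_Delta: "best_resp A x r v wp wm i \<mu> \<subseteq> Delta (A i)"
  unfolding best_resp_def by blast

lemma best_resp_nonempty:
  assumes "A i \<noteq> {}" "cpt_pref (r i) (v i) (wp i) (wm i)" "s \<in> strategy_profiles A"
  shows "best_resp A x r v wp wm i (mu_minus i (\<lambda>j. s $ j)) \<noteq> {}"
  unfolding best_resp_eq_maximizers
proof (rule maximizers_nonempty[OF compact_Delta])
  show "Delta (A i) \<noteq> {}" using assms(1) axis_in_Delta by blast
  let ?payoff = "\<lambda>(b, s). cpt_value (r i) (v i) (wp i) (wm i) (profiles A) (mu_joint i b (mu_minus i (\<lambda>j. s $ j))) (x i)"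
  have "continuous_on (Delta (A i)) (\<lambda>b. ?payoff (b, s))"
    by (rule continuous_on_compose2[OF continuous_on_cpt_payoff[OF assms(2)] continuous_on_Pair])
      (use assms(3) in auto)
  then show "continuous_on (Delta (A i))
      (\<lambda>b. cpt_value (r i) (v i) (wp i) (wm i) (profiles A) (mu_joint i b (mu_minus i (\<lambda>j. s $ j))) (x i))"
    by simp
qed

lemma closed_graph_on_best_resp:
  assumes "cpt_pref (r i) (v i) (wp i) (wm i)"
  shows "closed_graph_on (strategy_profiles A) (\<lambda>s. best_resp A x r v wp wm i (mu_minus i (\<lambda>j. s $ j)))"
  using closed_graph_on_maximizers[OF closed_Delta continuous_on_cpt_payoff[OF assms]]
  unfolding best_resp_eq_maximizers by simp

theorem theorem2:
  fixes A :: "'n::finite \<Rightarrow> 'a::finite set"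
    and x :: "'n \<Rightarrow> ('n \<Rightarrow> 'a) \<Rightarrow> real"
    and r :: "'n \<Rightarrow> real"
    and v wp wm :: "'n \<Rightarrow> real \<Rightarrow> real"
  assumes "\<And>i. A i \<noteq> {}"
    and "\<And>i. cpt_pref (r i) (v i) (wp i) (wm i)"
  shows "\<exists>\<sigma> :: 'n \<Rightarrow> real ^ 'a. (\<forall>i. \<sigma> i \<in> Delta (A i)) \<and>
           (\<forall>i. \<sigma> i \<in> closure (convex hull (best_resp A x r v wp wm i (mu_minus i \<sigma>))))"
proof -
  have "\<exists>s\<in>strategy_profiles A.
      \<forall>i. s $ i \<in> closure (convex hull (best_resp A x r v wp wm i (mu_minus i (\<lambda>j. s $ j))))"
  proof (rule product_fixpoint_closure_convex_hull[where K = "\<lambda>i. Delta (A i)"])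
    show "compact (strategy_profiles A)" by (rule compact_strategy_profiles)
    show "convex (strategy_profiles A)" by (rule convex_strategy_profiles)
    show "strategy_profiles A \<noteq> {}" using assms(1) by (rule strategy_profiles_nonempty)
    show "best_resp A x r v wp wm i (mu_minus i (\<lambda>j. s $ j)) \<noteq> {}" if "s \<in> strategy_profiles A" for i s
      using assms(1,2) that by (rule best_resp_nonempty)
    show "best_resp A x r v wp wm i (mu_minus i (\<lambda>j. s $ j)) \<subseteq> Delta (A i)" for i s
      by (rule best_resp_subset_Delta)
    show "compact (Delta (A i))" for i by (rule compact_Delta)
    show "t \<in> strategy_profiles A" if "\<And>i. t $ i \<in> best_resp A x r v wp wm i (mu_minus i (\<lambda>j. s $ j))" for s t
      using subsetD[OF best_resp_subset_Delta that] unfolding strategy_profiles_def by blast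
    show "closed_graph_on (strategy_profiles A) (\<lambda>s. best_resp A x r v wp wm i (mu_minus i (\<lambda>j. s $ j)))" for i
      using assms(2) by (rule closed_graph_on_best_resp)
  qed
  then show ?thesis unfolding strategy_profiles_def by blast
qed

end
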